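(* Let $G$ be a finite simple $3$-connected edge-pancyclic graph of order $n$. Then $e(G)\ge 2n-2$, and equality holds if and only if $G$ is isomorphic to the wheel $W_n=K_1\vee C_{n-1}$.
   Context: A $k$-cycle is a cycle of length $k$. A graph $G$ of order $n$ is edge-pancyclic if for every integer $k$ with $3\le k\le n$, every edge of $G$ lies in a $k$-cycle. $e(G)$ is the number of edges. $W_n$ is the graph obtained from a cycle on $n-1$ vertices by adding a new vertex adjacent to all of them. *)

theory Defs
  imports Main
begin

definition simple_graph :: "'a set \<Rightarrow> 'a set set \<Rightarrow> bool" where
  "simple_graph V E \<longleftrightarrow> finite V \<and>
     (\<forall>e\<in>E. \<exists>u v. u \<noteq> v \<and> u \<in> V \<and> v \<in> V \<and> e = {u, v})"

definition connected_on :: "'a set set \<Rightarrow> 'a set \<Rightarrow> bool" where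
  "connected_on E W \<longleftrightarrow>
     (\<forall>u\<in>W. \<forall>v\<in>W. (\<lambda>x y. x \<in> W \<and> y \<in> W \<and> {x, y} \<in> E)\<^sup>*\<^sup>* u v)"

definition k_connected :: "nat \<Rightarrow> 'a set \<Rightarrow> 'a set set \<Rightarrow> bool" where
  "k_connected k V E \<longleftrightarrow> card V > k \<and>
     (\<forall>S. S \<subseteq> V \<and> card S < k \<longrightarrow> connected_on E (V - S))"

definition is_cycle :: "'a set set \<Rightarrow> 'a list \<Rightarrow> bool" where
  "is_cycle E cs \<longleftrightarrow> length cs \<ge> 3 \<and> distinct cs \<and>
     (\<forall>i < length cs. {cs ! i, cs ! ((i + 1) mod length cs)} \<in> E)"

definition cycle_edges :: "'a list \<Rightarrow> 'a set set" where
  "cycle_edges cs = {{cs ! i, cs ! ((i + 1) mod length cs)} | i. i < length cs}"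

definition edge_pancyclic :: "'a set \<Rightarrow> 'a set set \<Rightarrow> bool" where
  "edge_pancyclic V E \<longleftrightarrow>
     (\<forall>k. 3 \<le> k \<and> k \<le> card V \<longrightarrow>
        (\<forall>e\<in>E. \<exists>cs. is_cycle E cs \<and> length cs = k \<and> e \<in> cycle_edges cs))"

text \<open>The wheel W_n on vertex set {0..<n}: hub 0, rim cycle 1,2,...,n-1,1.\<close>
definition wheel_edges :: "nat \<Rightarrow> nat set set" where
  "wheel_edges n = {{0, i} | i. 1 \<le> i \<and> i < n}
                 \<union> {{i, i + 1} | i. 1 \<le> i \<and> i + 1 < n}
                 \<union> {{n - 1, 1}}"

definition graph_iso :: "'a set \<Rightarrow> 'a set set \<Rightarrow> 'b set \<Rightarrow> 'b set set \<Rightarrow> bool" where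
  "graph_iso V E V' E' \<longleftrightarrow> (\<exists>f. bij_betw f V V' \<and>
     (\<forall>u\<in>V. \<forall>v\<in>V. {u, v} \<in> E \<longleftrightarrow> {f u, f v} \<in> E'))"

end

theory Submission
  imports Defs
begin

text \<open>Only the triangles matter: edge-pancyclicity puts every edge on a 3-cycle, and the
  bound holds for every 3-connected graph whose edges lie in triangles, by induction on n.
  If all degrees are at least 4 then 2e \<ge> 4n. Otherwise a vertex v of degree 3 has
  neighbours a, b, c with ab and bc edges (from the triangles on va, vb, vc). Deleting v
  and adding ac keeps 3-connectivity and the triangle property and loses 3 edges, or only 2
  if ac was new, so the bound is inherited. In the equality case ac was new and G - v + ac
  is a wheel W_{n-1}. There b must be the hub: otherwise a, b, c form a rim triangle, which
  W_m lacks for m \<ge> 5, or ac is a spoke, and then the rim edge from c to its rim neighbour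
  other than b lies in no triangle of G (in W_4 every vertex can serve as hub).
  Hence ac is a rim edge and G is that wheel with ac subdivided by v and v joined to the
  hub, which is W_n.\<close>

section \<open>Wheels\<close>

definition rim_succ :: "nat \<Rightarrow> nat \<Rightarrow> nat" where
  "rim_succ m r = (if r + 1 < m then r + 1 else 1)"

definition rim_pred :: "nat \<Rightarrow> nat \<Rightarrow> nat" where
  "rim_pred m r = (if 2 \<le> r then r - 1 else m - 1)"

lemma wheel_edge_iff:
  "{i, j} \<in> wheel_edges m \<longleftrightarrow>
     (i = 0 \<and> 1 \<le> j \<and> j < m) \<or> (j = 0 \<and> 1 \<le> i \<and> i < m) \<or>
     (1 \<le> i \<and> j = i + 1 \<and> j < m) \<or> (1 \<le> j \<and> i = j + 1 \<and> i < m) \<or>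
     (i = m - 1 \<and> j = 1) \<or> (i = 1 \<and> j = m - 1)"
  unfolding wheel_edges_def by (auto simp: doubleton_eq_iff)

lemma wheel_edge_less: "2 \<le> m \<Longrightarrow> {i, j} \<in> wheel_edges m \<Longrightarrow> i < m \<and> j < m"
  unfolding wheel_edge_iff by auto

lemma wheel_edge_irrefl: "4 \<le> m \<Longrightarrow> {i} \<notin> wheel_edges m"
  using wheel_edge_iff[of i i m] by auto

lemma wheel_edges_4: "i < 4 \<Longrightarrow> j < 4 \<Longrightarrow> {i, j} \<in> wheel_edges 4 \<longleftrightarrow> i \<noteq> j"
  unfolding wheel_edge_iff by auto

lemma wheel_rim_triangle_free:
  "5 \<le> m \<Longrightarrow> {x, y} \<in> wheel_edges m \<Longrightarrow> {y, z} \<in> wheel_edges m \<Longrightarrow> {x, z} \<in> wheel_edges m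
   \<Longrightarrow> x \<noteq> 0 \<Longrightarrow> y \<noteq> 0 \<Longrightarrow> z \<noteq> 0 \<Longrightarrow> False"
  unfolding wheel_edge_iff by auto

lemma wheel_rim_edge_iff:
  "4 \<le> m \<Longrightarrow> 1 \<le> q \<Longrightarrow> q < m \<Longrightarrow> t \<noteq> 0 \<Longrightarrow>
   {q, t} \<in> wheel_edges m \<longleftrightarrow> t = rim_succ m q \<or> t = rim_pred m q"
  unfolding wheel_edge_iff rim_succ_def rim_pred_def by auto

lemma rim_succ_pred_distinct:
  "4 \<le> m \<Longrightarrow> 1 \<le> q \<Longrightarrow> q < m \<Longrightarrow>
   rim_succ m q \<noteq> rim_pred m q \<and> rim_succ m q \<notin> {0, q} \<and> rim_pred m q \<notin> {0, q} \<and>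
   rim_succ m q < m \<and> rim_pred m q < m"
  unfolding rim_succ_def rim_pred_def by auto

lemma wheel_rim_other_neighbour:
  assumes m: "4 \<le> m" and q: "1 \<le> q" "q < m" and t: "t \<noteq> 0" "{q, t} \<in> wheel_edges m"
  obtains s where "s < m" "s \<notin> {0, q, t}" "{q, s} \<in> wheel_edges m"
proof -
  define s where "s = (if t = rim_succ m q then rim_pred m q else rim_succ m q)"
  have "s < m" "s \<notin> {0, q, t}"
    using rim_succ_pred_distinct[OF m q] wheel_rim_edge_iff[OF m q t(1)] t(2) by (auto simp: s_def)
  moreover have "{q, s} \<in> wheel_edges m"
    using wheel_rim_edge_iff[OF m q] \<open>s \<notin> {0, q, t}\<close> by (auto simp: s_def)
  ultimately show ?thesis using that by blast
qed

lemma wheel_rim_edge_cases: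
  assumes "{p, q} \<in> wheel_edges m" "p \<noteq> 0" "q \<noteq> 0"
  obtains r where "1 \<le> r" "r < m" "{p, q} = {r, rim_succ m r}"
proof -
  have "(1 \<le> p \<and> q = p + 1 \<and> q < m) \<or> (1 \<le> q \<and> p = q + 1 \<and> p < m) \<or>
        (p = m - 1 \<and> q = 1) \<or> (p = 1 \<and> q = m - 1)"
    using assms unfolding wheel_edge_iff by auto
  then show ?thesis
  proof (elim disjE)
    assume "p = m - 1 \<and> q = 1"
    then show ?thesis using that[of p] \<open>p \<noteq> 0\<close> unfolding rim_succ_def by auto
  next
    assume "p = 1 \<and> q = m - 1"
    then show ?thesis using that[of q] \<open>q \<noteq> 0\<close> unfolding rim_succ_def by (auto simp: insert_commute)
  qed (use that in \<open>auto simp: rim_succ_def insert_commute\<close>)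
qed

lemma card_wheel_edges:
  assumes "4 \<le> n"
  shows "card (wheel_edges n) = 2 * n - 2"
proof -
  have "wheel_edges n = (\<lambda>i. {0, i}) ` {1..<n} \<union> (\<lambda>i. {i, i + 1}) ` {1..<n - 1} \<union> {{n - 1, 1}}"
    unfolding wheel_edges_def by fastforce
  moreover have "card ((\<lambda>i. {0, i}) ` {1..<n}) = n - 1"
    by (subst card_image) (auto simp: inj_on_def doubleton_eq_iff)
  moreover have "card ((\<lambda>i. {i, i + 1}) ` {1..<n - 1}) = n - 2"
    by (subst card_image) (auto simp: inj_on_def doubleton_eq_iff)
  moreover have "(\<lambda>i. {0, i}) ` {1..<n} \<inter> (\<lambda>i. {i, i + 1}) ` {1..<n - 1} = {}"
    by (auto simp: doubleton_eq_iff)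
  moreover have "{n - 1, 1} \<notin> (\<lambda>i. {0, i}) ` {1..<n} \<union> (\<lambda>i. {i, i + 1}) ` {1..<n - 1}"
    using assms by (auto simp: doubleton_eq_iff)
  ultimately show ?thesis
    using assms by (simp add: card_Un_disjoint)
qed

lemma simple_graph_wheel:
  assumes "4 \<le> n"
  shows "simple_graph {0..<n} (wheel_edges n)"
  unfolding simple_graph_def
proof (intro conjI ballI)
  fix e assume e: "e \<in> wheel_edges n"
  then obtain i j where "e = {i, j}" unfolding wheel_edges_def by blast
  moreover have "i \<noteq> j" using e wheel_edge_irrefl[OF assms, of i] calculation by auto
  moreover have "i < n" "j < n" using e wheel_edge_less[of n i j] assms calculation by auto
  ultimately show "\<exists>u v. u \<noteq> v \<and> u \<in> {0..<n} \<and> v \<in> {0..<n} \<and> e = {u, v}" by auto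
qed simp

text \<open>Inserting a rim vertex with label p + 1 into W_m shifts the later labels up;
  collapse p undoes this on the old labels.\<close>

definition collapse :: "nat \<Rightarrow> nat \<Rightarrow> nat" where
  "collapse p i = (if i \<le> p then i else i - 1)"

lemma collapse_less: "i < m + 1 \<Longrightarrow> i \<noteq> p + 1 \<Longrightarrow> p < m \<Longrightarrow> collapse p i < m"
  unfolding collapse_def by auto

lemma wheel_edges_Suc_collapse:
  assumes "4 \<le> m" "1 \<le> p" "p < m" "i < m + 1" "j < m + 1" "i \<noteq> p + 1" "j \<noteq> p + 1"
  shows "{i, j} \<in> wheel_edges (m + 1) \<longleftrightarrow>
    {collapse p i, collapse p j} \<in> wheel_edges m \<and> {collapse p i, collapse p j} \<noteq> {p, rim_succ m p}"
proof -
  consider "p + 1 < m" "i \<le> p" "j \<le> p" | "p + 1 < m" "i \<le> p" "p + 2 \<le> j"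
    | "p + 1 < m" "p + 2 \<le> i" "j \<le> p" | "p + 1 < m" "p + 2 \<le> i" "p + 2 \<le> j"
    | "p + 1 = m" "i \<le> p" "j \<le> p"
    using assms by linarith
  then show ?thesis
    by cases
      (use assms in \<open>auto simp: wheel_edge_iff rim_succ_def collapse_def doubleton_eq_iff\<close>)
qed

lemma wheel_edges_Suc_inserted:
  assumes "4 \<le> m" "1 \<le> p" "p < m" "j < m + 1" "j \<noteq> p + 1"
  shows "{p + 1, j} \<in> wheel_edges (m + 1) \<longleftrightarrow> collapse p j \<in> {p, 0, rim_succ m p}"
  using assms unfolding wheel_edge_iff collapse_def rim_succ_def
  by (cases "p + 1 < m"; cases "j \<le> p") auto

section \<open>Graphs whose edges lie in triangles\<close>

definition neighbours :: "'a set set \<Rightarrow> 'a \<Rightarrow> 'a set" where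
  "neighbours E v = {u. {v, u} \<in> E}"

definition edges_in_triangles :: "'a set set \<Rightarrow> bool" where
  "edges_in_triangles E \<longleftrightarrow> (\<forall>x y. {x, y} \<in> E \<longrightarrow> (\<exists>z. {x, z} \<in> E \<and> {y, z} \<in> E))"

lemma edges_in_trianglesE:
  assumes "edges_in_triangles E" "{x, y} \<in> E"
  obtains z where "{x, z} \<in> E" "{y, z} \<in> E"
  using assms unfolding edges_in_triangles_def by blast

lemma simple_graph_edgeE:
  assumes "simple_graph V E" "e \<in> E"
  obtains x y where "e = {x, y}" "x \<noteq> y" "x \<in> V" "y \<in> V"
  using assms unfolding simple_graph_def by blast

lemma simple_graph_edgeD:
  "simple_graph V E \<Longrightarrow> {x, y} \<in> E \<Longrightarrow> x \<noteq> y \<and> x \<in> V \<and> y \<in> V"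
  by (erule simple_graph_edgeE) (auto simp: doubleton_eq_iff)

lemma simple_graph_edge_subset: "simple_graph V E \<Longrightarrow> e \<in> E \<Longrightarrow> e \<subseteq> V"
  by (erule simple_graph_edgeE) auto

lemma simple_graph_finite_edges:
  assumes "simple_graph V E"
  shows "finite E"
proof (rule finite_subset)
  show "E \<subseteq> Pow V" using simple_graph_edge_subset[OF assms] by blast
  show "finite (Pow V)" using assms unfolding simple_graph_def by simp
qed

lemma neighbours_subset: "simple_graph V E \<Longrightarrow> neighbours E v \<subseteq> V - {v}"
  unfolding neighbours_def by (auto dest: simple_graph_edgeD)

lemma incident_edges_eq:
  assumes "simple_graph V E"
  shows "{e \<in> E. v \<in> e} = (\<lambda>u. {v, u}) ` neighbours E v"
proof
  show "{e \<in> E. v \<in> e} \<subseteq> (\<lambda>u. {v, u}) ` neighbours E v"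
  proof
    fix e assume e: "e \<in> {e \<in> E. v \<in> e}"
    then obtain x y where "e = {x, y}" using simple_graph_edgeE[OF assms] by blast
    with e show "e \<in> (\<lambda>u. {v, u}) ` neighbours E v"
      unfolding neighbours_def by (auto simp: insert_commute)
  qed
qed (auto simp: neighbours_def)

lemma card_incident_edges:
  assumes "simple_graph V E"
  shows "card {e \<in> E. v \<in> e} = card (neighbours E v)"
proof -
  have "inj_on (\<lambda>u. {v, u}) (neighbours E v)"
    by (auto simp: inj_on_def doubleton_eq_iff)
  then show ?thesis unfolding incident_edges_eq[OF assms] by (rule card_image)
qed

lemma sum_degrees:
  assumes s: "simple_graph V E"
  shows "(\<Sum>v\<in>V. card (neighbours E v)) = 2 * card E"
proof -
  have fV: "finite V" using s unfolding simple_graph_def by blast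
  have fE: "finite E" using simple_graph_finite_edges[OF s] .
  have ends: "card {v \<in> V. v \<in> e} = 2" if e: "e \<in> E" for e
  proof -
    obtain x y where "e = {x, y}" "x \<noteq> y" "x \<in> V" "y \<in> V"
      using simple_graph_edgeE[OF s e] by blast
    then have "{v \<in> V. v \<in> e} = {x, y}" by auto
    then show ?thesis using \<open>x \<noteq> y\<close> by simp
  qed
  have "(\<Sum>v\<in>V. card (neighbours E v)) = (\<Sum>v\<in>V. \<Sum>e\<in>E. if v \<in> e then 1 else 0)"
    using fE by (simp add: card_incident_edges[OF s, symmetric] sum.inter_filter[symmetric])
  also have "\<dots> = (\<Sum>e\<in>E. \<Sum>v\<in>V. if v \<in> e then 1 else 0)"
    by (rule sum.swap)
  also have "\<dots> = (\<Sum>e\<in>E. 2)"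
    using fV ends by (simp add: sum.inter_filter[symmetric])
  finally show ?thesis by simp
qed

lemma card_edges_lower_bound:
  assumes "simple_graph V E" "\<And>v. v \<in> V \<Longrightarrow> d \<le> card (neighbours E v)"
  shows "d * card V \<le> 2 * card E"
proof -
  have "d * card V = (\<Sum>v\<in>V. d)" by simp
  also have "\<dots> \<le> (\<Sum>v\<in>V. card (neighbours E v))" using assms(2) by (rule sum_mono)
  finally show ?thesis using sum_degrees[OF assms(1)] by simp
qed

lemma k_connected_3_degree:
  assumes s: "simple_graph V E" and k: "k_connected 3 V E" and v: "v \<in> V"
  shows "3 \<le> card (neighbours E v)"
proof (rule ccontr)
  let ?N = "neighbours E v"
  assume "\<not> 3 \<le> card ?N"
  then have small: "card ?N < 3" by simp
  have fV: "finite V" using s unfolding simple_graph_def by blast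
  have N: "?N \<subseteq> V - {v}" using neighbours_subset[OF s] .
  have conn: "connected_on E (V - ?N)"
    using k small N unfolding k_connected_def by blast
  have "card (insert v ?N) < card V"
    using k small N fV finite_subset[OF N] unfolding k_connected_def by (simp add: card_insert_if)
  have "\<not> V \<subseteq> insert v ?N"
  proof
    assume "V \<subseteq> insert v ?N"
    then have "card V \<le> card (insert v ?N)"
      using fV N by (intro card_mono) (auto intro: finite_subset)
    then show False using \<open>card (insert v ?N) < card V\<close> by simp
  qed
  then obtain w where w: "w \<in> V" "w \<notin> insert v ?N" by blast
  have "(\<lambda>x y. x \<in> V - ?N \<and> y \<in> V - ?N \<and> {x, y} \<in> E)\<^sup>*\<^sup>* v w"
    using conn v w N unfolding connected_on_def by blast
  then show False
  proof (cases rule: converse_rtranclpE)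
    case base then show ?thesis using w by blast
  next
    case (step y) then show ?thesis by (simp add: neighbours_def)
  qed
qed

lemma edge_pancyclic_edges_in_triangles:
  assumes "edge_pancyclic V E" "3 \<le> card V"
  shows "edges_in_triangles E"
  unfolding edges_in_triangles_def
proof (intro allI impI)
  fix x y assume "{x, y} \<in> E"
  then obtain cs where cs: "is_cycle E cs" "length cs = 3" "{x, y} \<in> cycle_edges cs"
    using assms unfolding edge_pancyclic_def by blast
  then obtain c0 c1 c2 where cs_eq: "cs = [c0, c1, c2]"
    by (cases cs; cases "tl cs"; cases "tl (tl cs)") auto
  have step: "{cs ! i, cs ! ((i + 1) mod 3)} \<in> E" if "i < 3" for i
    using cs(1,2) that unfolding is_cycle_def by simp
  have "{c0, c1} \<in> E" "{c1, c2} \<in> E" "{c2, c0} \<in> E"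
    using step[of 0] step[of 1] step[of 2] unfolding cs_eq by simp_all
  then have triangle: "{u, w} \<in> E" if "u \<in> {c0, c1, c2}" "w \<in> {c0, c1, c2}" "u \<noteq> w" for u w
    using that by (auto simp: insert_commute)
  have distinct: "c0 \<noteq> c1" "c1 \<noteq> c2" "c0 \<noteq> c2" using cs(1) unfolding is_cycle_def cs_eq by auto
  obtain i where i: "i < 3" "{x, y} = {cs ! i, cs ! ((i + 1) mod 3)}"
    using cs(2,3) unfolding cycle_edges_def by auto
  moreover have "i = 0 \<or> i = 1 \<or> i = 2" using i(1) by arith
  ultimately have "{x, y} = {c0, c1} \<or> {x, y} = {c1, c2} \<or> {x, y} = {c2, c0}"
    unfolding cs_eq by (elim disjE) simp_all
  then have "x \<in> {c0, c1, c2}" "y \<in> {c0, c1, c2}" "x \<noteq> y"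
    using distinct by (auto simp: doubleton_eq_iff)
  moreover obtain z where "z \<in> {c0, c1, c2}" "z \<noteq> x" "z \<noteq> y"
    using calculation distinct by auto
  ultimately show "\<exists>z. {x, z} \<in> E \<and> {y, z} \<in> E"
    using triangle by blast
qed

section \<open>Bypassing a vertex of degree three\<close>

lemma degree_3_neighbour_path:
  assumes s: "simple_graph V E" and tri: "edges_in_triangles E" and deg: "card (neighbours E v) = 3"
  obtains a b c where "neighbours E v = {a, b, c}" "a \<noteq> b" "a \<noteq> c" "b \<noteq> c" "{a, b} \<in> E" "{b, c} \<in> E"
proof -
  obtain x y z where N: "neighbours E v = {x, y, z}" and distinct: "x \<noteq> y" "x \<noteq> z" "y \<noteq> z"
    using deg by (auto simp: card_3_iff)
  have partner: "\<exists>w \<in> {x, y, z}. w \<noteq> u \<and> {u, w} \<in> E" if "u \<in> {x, y, z}" for u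
  proof -
    have "{v, u} \<in> E" using that N unfolding neighbours_def by blast
    then obtain w where "{v, w} \<in> E" "{u, w} \<in> E" by (rule edges_in_trianglesE[OF tri])
    moreover from this have "w \<in> {x, y, z}" "w \<noteq> u"
      using N simple_graph_edgeD[OF s] unfolding neighbours_def by blast+
    ultimately show ?thesis by blast
  qed
  have "{x, y} \<in> E \<or> {x, z} \<in> E" "{x, y} \<in> E \<or> {y, z} \<in> E" "{x, z} \<in> E \<or> {y, z} \<in> E"
    using partner[of x] partner[of y] partner[of z] by (auto simp: insert_commute)
  then consider "{x, y} \<in> E" "{y, z} \<in> E" | "{y, x} \<in> E" "{x, z} \<in> E" | "{x, z} \<in> E" "{z, y} \<in> E"
    by (auto simp: insert_commute)
  then show ?thesis
  proof cases
    case 1 then show ?thesis using that N distinct by blast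
  next
    case 2 then show ?thesis using that[of y x z] N distinct by (auto simp: insert_commute)
  next
    case 3 then show ?thesis using that[of x z y] N distinct by (auto simp: insert_commute)
  qed
qed

text \<open>A walk stopping at v remembers the vertex w it came from; when it leaves v to z,
  the edge wz replaces the detour through v.\<close>

lemma rtranclp_delete_vertex:
  assumes path: "(\<lambda>x y. x \<in> U \<and> y \<in> U \<and> {x, y} \<in> E)\<^sup>*\<^sup>* x z" (is "?R\<^sup>*\<^sup>* x z")
    and x: "x \<in> U - {v}" and loopfree: "{v} \<notin> E"
    and nbrs: "\<And>x y. {v, x} \<in> E \<Longrightarrow> {v, y} \<in> E \<Longrightarrow> x \<noteq> y \<Longrightarrow> {x, y} \<in> E'"
    and keep: "\<And>e. e \<in> E \<Longrightarrow> v \<notin> e \<Longrightarrow> e \<in> E'"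
  defines "R' \<equiv> \<lambda>x y. x \<in> U - {v} \<and> y \<in> U - {v} \<and> {x, y} \<in> E'"
  shows "if z = v then \<exists>w \<in> U - {v}. {v, w} \<in> E \<and> R'\<^sup>*\<^sup>* x w else R'\<^sup>*\<^sup>* x z"
  using path
proof (induction rule: rtranclp_induct)
  case base then show ?case using x by auto
next
  case (step y z)
  then have yz: "y \<in> U" "z \<in> U" "{y, z} \<in> E" by auto
  show ?case
  proof (cases "z = v")
    case True
    then have "y \<noteq> v" using yz loopfree by auto
    then show ?thesis using step.IH yz True by (auto simp: insert_commute)
  next
    case z: False
    show ?thesis
    proof (cases "y = v")
      case True
      then obtain w where w: "w \<in> U - {v}" "{v, w} \<in> E" "R'\<^sup>*\<^sup>* x w" using step.IH by auto
      have "w = z \<or> R' w z" using nbrs[OF w(2), of z] yz True z w(1) unfolding R'_def by auto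
      then show ?thesis using w(3) z by (auto intro: rtranclp.rtrancl_into_rtrancl)
    next
      case False
      then have "R' y z" using keep[OF yz(3)] yz z unfolding R'_def by auto
      then show ?thesis using step.IH False z by (auto intro: rtranclp.rtrancl_into_rtrancl)
    qed
  qed
qed

lemma connected_on_delete_vertex:
  assumes conn: "connected_on E U" and loopfree: "{v} \<notin> E"
    and nbrs: "\<And>x y. {v, x} \<in> E \<Longrightarrow> {v, y} \<in> E \<Longrightarrow> x \<noteq> y \<Longrightarrow> {x, y} \<in> E'"
    and keep: "\<And>e. e \<in> E \<Longrightarrow> v \<notin> e \<Longrightarrow> e \<in> E'"
  shows "connected_on E' (U - {v})"
  unfolding connected_on_def
proof (intro ballI)
  fix x y assume x: "x \<in> U - {v}" and y: "y \<in> U - {v}"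
  then have "(\<lambda>x y. x \<in> U \<and> y \<in> U \<and> {x, y} \<in> E)\<^sup>*\<^sup>* x y"
    using conn unfolding connected_on_def by blast
  from rtranclp_delete_vertex[OF this x loopfree nbrs keep] y
  show "(\<lambda>x y. x \<in> U - {v} \<and> y \<in> U - {v} \<and> {x, y} \<in> E')\<^sup>*\<^sup>* x y" by simp
qed

text \<open>bypass E v a c is G - v + ac; reattach undoes it, removing ac and joining a new
  vertex v to a, b and c.\<close>

definition bypass :: "'a set set \<Rightarrow> 'a \<Rightarrow> 'a \<Rightarrow> 'a \<Rightarrow> 'a set set" where
  "bypass E v a c = {e \<in> E. v \<notin> e} \<union> {{a, c}}"

definition reattach :: "'a set set \<Rightarrow> 'a \<Rightarrow> 'a \<Rightarrow> 'a \<Rightarrow> 'a \<Rightarrow> 'a set set" where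
  "reattach E v a b c = E - {{a, c}} \<union> {{v, a}, {v, b}, {v, c}}"

lemma reattach_swap: "reattach E v a b c = reattach E v c b a"
  unfolding reattach_def by (simp add: insert_commute)

context
  fixes V :: "'a set" and E :: "'a set set" and v a b c :: 'a
  assumes graph: "simple_graph V E" and v: "v \<in> V"
    and nbrs: "neighbours E v = {a, b, c}" and distinct: "a \<noteq> b" "a \<noteq> c" "b \<noteq> c"
    and ab: "{a, b} \<in> E" and bc: "{b, c} \<in> E"
begin

lemma neighbours_mem: "a \<in> V - {v}" "b \<in> V - {v}" "c \<in> V - {v}"
  using neighbours_subset[OF graph, of v] nbrs by auto

lemma incident_edges_degree_3: "{e \<in> E. v \<in> e} = {{v, a}, {v, b}, {v, c}}"
  using incident_edges_eq[OF graph, of v] nbrs by simp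

lemma bypass_clique:
  "x \<in> {a, b, c} \<Longrightarrow> y \<in> {a, b, c} \<Longrightarrow> x \<noteq> y \<Longrightarrow> {x, y} \<in> bypass E v a c"
  using ab bc neighbours_mem unfolding bypass_def by (auto simp: insert_commute)

lemma simple_graph_bypass: "simple_graph (V - {v}) (bypass E v a c)"
  unfolding simple_graph_def
proof (intro conjI ballI)
  show "finite (V - {v})" using graph unfolding simple_graph_def by simp
  fix e assume e: "e \<in> bypass E v a c"
  show "\<exists>x y. x \<noteq> y \<and> x \<in> V - {v} \<and> y \<in> V - {v} \<and> e = {x, y}"
  proof (cases "e = {a, c}")
    case True then show ?thesis using neighbours_mem distinct by blast
  next
    case False
    then have "e \<in> E" "v \<notin> e" using e unfolding bypass_def by auto
    then obtain x y where "e = {x, y}" "x \<noteq> y" "x \<in> V" "y \<in> V"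
      by (blast elim: simple_graph_edgeE[OF graph])
    then show ?thesis using \<open>v \<notin> e\<close> by blast
  qed
qed

lemma edges_in_triangles_bypass:
  assumes tri: "edges_in_triangles E"
  shows "edges_in_triangles (bypass E v a c)"
  unfolding edges_in_triangles_def
proof (intro allI impI)
  fix x y assume xy: "{x, y} \<in> bypass E v a c"
  show "\<exists>z. {x, z} \<in> bypass E v a c \<and> {y, z} \<in> bypass E v a c"
  proof (cases "{x, y} = {a, c}")
    case True
    then show ?thesis using bypass_clique[of x b] bypass_clique[of y b] distinct
      by (auto simp: doubleton_eq_iff)
  next
    case False
    then have e: "{x, y} \<in> E" "x \<noteq> v" "y \<noteq> v" using xy unfolding bypass_def by auto
    obtain z where z: "{x, z} \<in> E" "{y, z} \<in> E" using edges_in_trianglesE[OF tri e(1)] by blast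
    show ?thesis
    proof (cases "z = v")
      case False
      then show ?thesis using z e unfolding bypass_def by auto
    next
      case True
      then have "x \<in> neighbours E v" "y \<in> neighbours E v"
        using z unfolding neighbours_def by (simp_all add: insert_commute)
      then have xy_nbrs: "x \<in> {a, b, c}" "y \<in> {a, b, c}" using nbrs by simp_all
      then obtain w where "w \<in> {a, b, c}" "w \<noteq> x" "w \<noteq> y" using distinct by auto
      then show ?thesis
        using bypass_clique[OF xy_nbrs(1), of w] bypass_clique[OF xy_nbrs(2), of w] by auto
    qed
  qed
qed

lemma k_connected_bypass:
  assumes k: "k_connected 3 V E" and n: "5 \<le> card V"
  shows "k_connected 3 (V - {v}) (bypass E v a c)"
  unfolding k_connected_def
proof (intro conjI allI impI)
  show "3 < card (V - {v})" using n v by simp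
  fix S assume S: "S \<subseteq> V - {v} \<and> card S < 3"
  then have "connected_on E (V - S)" using k unfolding k_connected_def by blast
  then have "connected_on (bypass E v a c) (V - S - {v})"
  proof (rule connected_on_delete_vertex)
    show "{v} \<notin> E" using simple_graph_edgeD[OF graph, of v v] by auto
    show "{x, y} \<in> bypass E v a c" if "{v, x} \<in> E" "{v, y} \<in> E" "x \<noteq> y" for x y
      using that bypass_clique nbrs unfolding neighbours_def by blast
    show "e \<in> bypass E v a c" if "e \<in> E" "v \<notin> e" for e
      using that unfolding bypass_def by blast
  qed
  moreover have "V - S - {v} = V - {v} - S" by blast
  ultimately show "connected_on (bypass E v a c) (V - {v} - S)" by simp
qed

lemma card_bypass: "card E = card (bypass E v a c) + (if {a, c} \<in> E then 3 else 2)"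
proof -
  let ?E0 = "{e \<in> E. v \<notin> e}"
  have fin: "finite ?E0" using simple_graph_finite_edges[OF graph] by simp
  have "card {e \<in> E. v \<in> e} = 3"
    unfolding incident_edges_degree_3 using distinct neighbours_mem by (auto simp: doubleton_eq_iff)
  moreover have "card (?E0 \<union> {e \<in> E. v \<in> e}) = card ?E0 + card {e \<in> E. v \<in> e}"
    using fin simple_graph_finite_edges[OF graph] by (intro card_Un_disjoint) auto
  moreover have "?E0 \<union> {e \<in> E. v \<in> e} = E" by blast
  ultimately have "card E = card ?E0 + 3" by simp
  moreover have "{a, c} \<in> ?E0 \<longleftrightarrow> {a, c} \<in> E" using neighbours_mem by auto
  ultimately show ?thesis using fin unfolding bypass_def by (simp add: card_insert_if)
qed

lemma edges_eq_bypass: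
  assumes "{a, c} \<notin> E"
  shows "E = reattach (bypass E v a c) v a b c"
  using assms incident_edges_degree_3 unfolding bypass_def reattach_def by blast

end

section \<open>Wheel labellings\<close>

definition wheel_labelling :: "(nat \<Rightarrow> 'a) \<Rightarrow> nat \<Rightarrow> 'a set \<Rightarrow> 'a set set \<Rightarrow> bool" where
  "wheel_labelling g n V E \<longleftrightarrow> bij_betw g {0..<n} V \<and>
     (\<forall>i<n. \<forall>j<n. {g i, g j} \<in> E \<longleftrightarrow> {i, j} \<in> wheel_edges n)"

lemma wheel_labelling_edge_iff:
  "wheel_labelling g n V E \<Longrightarrow> i < n \<Longrightarrow> j < n \<Longrightarrow> {g i, g j} \<in> E \<longleftrightarrow> {i, j} \<in> wheel_edges n"
  unfolding wheel_labelling_def by blast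

lemma wheel_labelling_in: "wheel_labelling g n V E \<Longrightarrow> i < n \<Longrightarrow> g i \<in> V"
  unfolding wheel_labelling_def by (auto dest: bij_betwE)

lemma wheel_labelling_eq_iff:
  "wheel_labelling g n V E \<Longrightarrow> i < n \<Longrightarrow> j < n \<Longrightarrow> g i = g j \<longleftrightarrow> i = j"
  unfolding wheel_labelling_def bij_betw_def by (auto dest: inj_onD)

lemma wheel_labelling_doubleton_eq_iff:
  assumes "wheel_labelling g n V E" "i < n" "j < n" "k < n" "l < n"
  shows "{g i, g j} = {g k, g l} \<longleftrightarrow> {i, j} = {k, l}"
  using inj_on_image_eq_iff[of g "{0..<n}" "{i, j}" "{k, l}"] assms
  unfolding wheel_labelling_def bij_betw_def by simp

lemma wheel_labelling_indexE:
  assumes "wheel_labelling g n V E" "x \<in> V"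
  obtains i where "i < n" "x = g i"
  using assms unfolding wheel_labelling_def bij_betw_def by auto

lemma wheel_labelling_graph_iso:
  assumes "wheel_labelling g n V E"
  shows "graph_iso V E {0..<n} (wheel_edges n)"
proof -
  have g: "bij_betw g {0..<n} V" using assms unfolding wheel_labelling_def by blast
  define f where "f = inv_into {0..<n} g"
  have f: "bij_betw f V {0..<n}" unfolding f_def by (rule bij_betw_inv_into[OF g])
  have "{u, v} \<in> E \<longleftrightarrow> {f u, f v} \<in> wheel_edges n" if "u \<in> V" "v \<in> V" for u v
  proof -
    have "g (f u) = u" "g (f v) = v" "f u < n" "f v < n"
      using that g f unfolding f_def by (auto simp: bij_betw_def f_inv_into_f)
    then show ?thesis using wheel_labelling_edge_iff[OF assms] by metis
  qed
  then show ?thesis using f unfolding graph_iso_def by blast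
qed

lemma graph_iso_card_edges:
  assumes s: "simple_graph V E" and s': "simple_graph V' E'" and iso: "graph_iso V E V' E'"
  shows "card E = card E'"
proof -
  obtain f where f: "bij_betw f V V'" and edges: "\<forall>u\<in>V. \<forall>v\<in>V. {u, v} \<in> E \<longleftrightarrow> {f u, f v} \<in> E'"
    using iso unfolding graph_iso_def by blast
  have "bij_betw (image f) E E'"
    unfolding bij_betw_def
  proof
    show "inj_on (image f) E"
    proof (rule inj_onI)
      fix e1 e2 assume "e1 \<in> E" "e2 \<in> E" "f ` e1 = f ` e2"
      moreover have "inj_on f V" using f unfolding bij_betw_def by blast
      ultimately show "e1 = e2"
        using inj_on_image_eq_iff simple_graph_edge_subset[OF s] by blast
    qed
    show "image f ` E = E'"
    proof (intro equalityI subsetI)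
      fix e assume "e \<in> image f ` E"
      then obtain e0 where "e0 \<in> E" "e = f ` e0" by blast
      moreover obtain x y where "e0 = {x, y}" "x \<in> V" "y \<in> V"
        using simple_graph_edgeE[OF s \<open>e0 \<in> E\<close>] by blast
      ultimately show "e \<in> E'" using edges by auto
    next
      fix e assume "e \<in> E'"
      then obtain x' y' where xy': "e = {x', y'}" "x' \<in> V'" "y' \<in> V'"
        by (auto elim: simple_graph_edgeE[OF s'])
      then obtain x y where "x \<in> V" "y \<in> V" "x' = f x" "y' = f y"
        using f unfolding bij_betw_def by auto
      then have "{x, y} \<in> E" using edges xy' \<open>e \<in> E'\<close> by auto
      moreover have "e = f ` {x, y}" using xy' \<open>x' = f x\<close> \<open>y' = f y\<close> by simp
      ultimately show "e \<in> image f ` E" by blast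
    qed
  qed
  then show ?thesis by (rule bij_betw_same_card)
qed

lemma wheel_labelling_card_edges:
  assumes "simple_graph V E" "wheel_labelling g n V E" "4 \<le> n"
  shows "card E = 2 * n - 2"
  using graph_iso_card_edges[OF assms(1) simple_graph_wheel wheel_labelling_graph_iso]
    card_wheel_edges assms by simp

lemma wheel_labelling_4_iff:
  assumes "bij_betw g {0..<4} V"
  shows "wheel_labelling g 4 V E \<longleftrightarrow> (\<forall>x\<in>V. \<forall>y\<in>V. {x, y} \<in> E \<longleftrightarrow> x \<noteq> y)"
proof -
  have "g i = g j \<longleftrightarrow> i = j" if "i < 4" "j < 4" for i j
    using assms that unfolding bij_betw_def by (auto dest: inj_onD)
  then have "(\<forall>i<4. \<forall>j<4. {g i, g j} \<in> E \<longleftrightarrow> {i, j} \<in> wheel_edges 4) \<longleftrightarrow>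
             (\<forall>i<4. \<forall>j<4. {g i, g j} \<in> E \<longleftrightarrow> g i \<noteq> g j)"
    by (simp add: wheel_edges_4)
  moreover have V: "V = g ` {0..<4}" using assms unfolding bij_betw_def by simp
  have "(\<forall>x\<in>V. \<forall>y\<in>V. {x, y} \<in> E \<longleftrightarrow> x \<noteq> y) \<longleftrightarrow>
        (\<forall>i<4. \<forall>j<4. {g i, g j} \<in> E \<longleftrightarrow> g i \<noteq> g j)"
    unfolding V ball_simps(9) by (simp only: atLeast0LessThan Ball_def lessThan_iff)
  ultimately show ?thesis using assms unfolding wheel_labelling_def by simp
qed

lemma wheel_labelling_4_hub:
  assumes g: "wheel_labelling g 4 V E" and x: "x \<in> V"
  obtains h where "wheel_labelling h 4 V E" "h 0 = x"
proof -
  obtain t where t: "t < 4" "x = g t" using wheel_labelling_indexE[OF g x] .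
  define \<sigma> where "\<sigma> i = (if i = 0 then t else if i = t then 0 else i)" for i :: nat
  have "bij_betw \<sigma> {0..<4} {0..<4}"
    by (rule bij_betw_byWitness[where f' = \<sigma>]) (use t in \<open>auto simp: \<sigma>_def\<close>)
  then have bij: "bij_betw (g \<circ> \<sigma>) {0..<4} V"
    using g unfolding wheel_labelling_def by (blast intro: bij_betw_trans)
  have g_bij: "bij_betw g {0..<4} V" using g unfolding wheel_labelling_def by blast
  have "wheel_labelling (g \<circ> \<sigma>) 4 V E"
    using g unfolding wheel_labelling_4_iff[OF bij] wheel_labelling_4_iff[OF g_bij] .
  moreover have "(g \<circ> \<sigma>) 0 = x" using t by (simp add: \<sigma>_def)
  ultimately show ?thesis by (rule that)
qed

lemma k_connected_3_card_4_wheel: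
  assumes s: "simple_graph V E" and k: "k_connected 3 V E" and card: "card V = 4"
  obtains g where "wheel_labelling g 4 V E"
proof -
  have fV: "finite V" using s unfolding simple_graph_def by blast
  obtain xs where xs: "set xs = V" "distinct xs" using finite_distinct_list[OF fV] by blast
  then have "length xs = 4" using card distinct_card by fastforce
  then have bij: "bij_betw ((!) xs) {0..<4} V"
    using bij_betw_nth[OF xs(2)] xs by (simp add: atLeast0LessThan)
  have "{x, y} \<in> E" if "x \<in> V" "y \<in> V" "x \<noteq> y" for x y
  proof -
    have "neighbours E x \<subseteq> V - {x}" by (rule neighbours_subset[OF s])
    moreover have "card (V - {x}) \<le> card (neighbours E x)"
      using k_connected_3_degree[OF s k that(1)] card fV that(1) by simp
    ultimately have "neighbours E x = V - {x}" using fV by (intro card_seteq) auto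
    then show ?thesis using that unfolding neighbours_def by blast
  qed
  then have "wheel_labelling ((!) xs) 4 V E"
    unfolding wheel_labelling_4_iff[OF bij] using simple_graph_edgeD[OF s] by blast
  then show ?thesis by (rule that)
qed

section \<open>Reinserting the bypassed vertex\<close>

lemma bij_betw_insert_at:
  assumes g: "bij_betw g {0..<m} V" and v: "v \<notin> V" and p: "p < m"
  shows "bij_betw (\<lambda>i. if i = p + 1 then v else g (collapse p i)) {0..<m + 1} (insert v V)"
    (is "bij_betw ?h _ _")
proof -
  have "bij_betw (collapse p) ({0..<m + 1} - {p + 1}) {0..<m}"
    by (rule bij_betw_byWitness[where f' = "\<lambda>k. if k \<le> p then k else k + 1"])
      (use p in \<open>auto simp: collapse_def\<close>)
  then have "bij_betw (g \<circ> collapse p) ({0..<m + 1} - {p + 1}) V"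
    using g by (rule bij_betw_trans)
  then have "bij_betw ?h ({0..<m + 1} - {p + 1}) V"
    by (rule bij_betw_cong[THEN iffD1, rotated]) auto
  then have "bij_betw ?h ({0..<m + 1} - {p + 1} \<union> {p + 1}) (V \<union> {?h (p + 1)})"
    using notIn_Un_bij_betw3[of "p + 1" _ ?h] v by simp
  moreover have "{0..<m + 1} - {p + 1} \<union> {p + 1} = {0..<m + 1}" using p by auto
  ultimately show ?thesis by simp
qed

lemma reattach_spoke_iff:
  assumes g: "wheel_labelling g m V E" and s: "simple_graph V E" and v: "v \<notin> V"
    and xzy: "x < m" "z < m" "y < m" and k: "k < m"
  shows "{v, g k} \<in> reattach E v (g x) (g z) (g y) \<longleftrightarrow> k \<in> {x, z, y}"
proof -
  have "{v, g k} \<notin> E" using simple_graph_edgeD[OF s, of v "g k"] v by auto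
  then have "{v, g k} \<in> reattach E v (g x) (g z) (g y) \<longleftrightarrow> g k \<in> {g x, g z, g y}"
    unfolding reattach_def by (auto simp: doubleton_eq_iff)
  also have "\<dots> \<longleftrightarrow> k \<in> {x, z, y}"
    using wheel_labelling_eq_iff[OF g k] xzy by auto
  finally show ?thesis .
qed

lemma reattach_rim_iff:
  assumes g: "wheel_labelling g m V E" and v: "v \<notin> V"
    and xy: "x < m" "y < m" and kl: "k < m" "l < m"
  shows "{g k, g l} \<in> reattach E v (g x) (g z) (g y) \<longleftrightarrow>
           {k, l} \<in> wheel_edges m \<and> {k, l} \<noteq> {x, y}"
proof -
  have "v \<noteq> g k" "v \<noteq> g l" using wheel_labelling_in[OF g] kl v by auto
  then have "{g k, g l} \<notin> {{v, g x}, {v, g z}, {v, g y}}" by (auto simp: doubleton_eq_iff)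
  then have "{g k, g l} \<in> reattach E v (g x) (g z) (g y) \<longleftrightarrow>
               {g k, g l} \<in> E \<and> {g k, g l} \<noteq> {g x, g y}"
    unfolding reattach_def by simp
  then show ?thesis
    using wheel_labelling_edge_iff[OF g kl] wheel_labelling_doubleton_eq_iff[OF g kl xy] by simp
qed

lemma wheel_labelling_subdivide_rim:
  assumes m: "4 \<le> m" and g: "wheel_labelling g m V E" and s: "simple_graph V E" and v: "v \<notin> V"
    and p: "1 \<le> p" "p < m"
  shows "wheel_labelling (\<lambda>i. if i = p + 1 then v else g (collapse p i)) (m + 1) (insert v V)
           (reattach E v (g p) (g 0) (g (rim_succ m p)))"
    (is "wheel_labelling ?h _ _ ?E")
proof -
  let ?q = "rim_succ m p"
  have q: "?q < m" using rim_succ_pred_distinct[OF m p] by auto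
  have hub: "0 < m" using m by simp
  have "{i, j} \<in> wheel_edges (m + 1) \<longleftrightarrow> {?h i, ?h j} \<in> ?E" if ij: "i < m + 1" "j < m + 1" for i j
  proof (cases "i = p + 1"; cases "j = p + 1")
    assume "i = p + 1" "j = p + 1"
    then have "{?h i, ?h j} = {v}" "{i, j} = {p + 1}" by simp_all
    moreover have "{v} \<notin> ?E"
      using simple_graph_edgeD[OF s, of v v] wheel_labelling_in[OF g] p q v unfolding reattach_def by auto
    moreover have "{p + 1} \<notin> wheel_edges (m + 1)" using wheel_edge_irrefl m by simp
    ultimately show ?thesis by (simp only: simp_thms)
  next
    assume i: "i = p + 1" and j: "j \<noteq> p + 1"
    have "collapse p j < m" using collapse_less ij(2) j p by blast
    then show ?thesis
      using reattach_spoke_iff[OF g s v p(2) hub q] wheel_edges_Suc_inserted[OF m p ij(2) j] i j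
      by (simp only: simp_thms if_True if_False)
  next
    assume i: "i \<noteq> p + 1" and j: "j = p + 1"
    have "collapse p i < m" using collapse_less ij(1) i p by blast
    then show ?thesis
      using reattach_spoke_iff[OF g s v p(2) hub q] wheel_edges_Suc_inserted[OF m p ij(1) i] i j
      by (simp only: simp_thms if_True if_False insert_commute[of i] insert_commute[of v])
  next
    assume i: "i \<noteq> p + 1" and j: "j \<noteq> p + 1"
    have "collapse p i < m" "collapse p j < m" using collapse_less ij i j p by blast+
    then show ?thesis
      using reattach_rim_iff[OF g v p(2) q] wheel_edges_Suc_collapse[OF m p ij i j] i j
      by (simp only: if_False)
  qed
  moreover have "bij_betw ?h {0..<m + 1} (insert v V)"
    using g bij_betw_insert_at[OF _ v p(2)] unfolding wheel_labelling_def by blast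
  ultimately show ?thesis unfolding wheel_labelling_def by auto
qed

lemma wheel_labelling_reinsert_at_hub:
  assumes m: "4 \<le> m" and g: "wheel_labelling g m V E" and s: "simple_graph V E" and v: "v \<notin> V"
    and ac: "a \<in> V" "c \<in> V" "a \<noteq> g 0" "c \<noteq> g 0" "{a, c} \<in> E"
  obtains h where "wheel_labelling h (m + 1) (insert v V) (reattach E v a (g 0) c)"
proof -
  obtain i where i: "i < m" "a = g i" using wheel_labelling_indexE[OF g ac(1)] .
  obtain k where k: "k < m" "c = g k" using wheel_labelling_indexE[OF g ac(2)] .
  have "{i, k} \<in> wheel_edges m" using wheel_labelling_edge_iff[OF g i(1) k(1)] ac(5) i k by simp
  moreover have "i \<noteq> 0" "k \<noteq> 0" using ac(3,4) i k by metis+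
  ultimately obtain r where r: "1 \<le> r" "r < m" "{i, k} = {r, rim_succ m r}"
    by (rule wheel_rim_edge_cases)
  then have "g ` {i, k} = g ` {r, rim_succ m r}" by simp
  then have "a = g r \<and> c = g (rim_succ m r) \<or> a = g (rim_succ m r) \<and> c = g r"
    using i k by (simp add: doubleton_eq_iff)
  then have "reattach E v a (g 0) c = reattach E v (g r) (g 0) (g (rim_succ m r))"
    using reattach_swap by metis
  then show ?thesis
    using wheel_labelling_subdivide_rim[OF m g s v r(1,2)] by (simp add: that)
qed

text \<open>The rim edge from q to its other rim neighbour r loses its only triangle, the one
  through the hub.\<close>

lemma removed_spoke_not_in_triangle:
  assumes m: "5 \<le> m" and g: "wheel_labelling g m V E" and s: "simple_graph V E" and v: "v \<notin> V"
    and q: "1 \<le> q" "q < m" and t: "t \<noteq> 0" "{q, t} \<in> wheel_edges m"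
  shows "\<not> edges_in_triangles (reattach E v (g 0) (g t) (g q))"
    (is "\<not> edges_in_triangles ?E")
proof
  assume tri: "edges_in_triangles ?E"
  have tq: "0 < m" "t < m" using wheel_edge_less[OF _ t(2)] m by auto
  obtain r where r: "r < m" "r \<notin> {0, q, t}" "{q, r} \<in> wheel_edges m"
    using wheel_rim_other_neighbour[of m q t] m q t by auto
  note rim = reattach_rim_iff[OF g v tq(1) q(2)] and spoke = reattach_spoke_iff[OF g s v tq q(2)]
  have "{q, r} \<noteq> {0, q}" using r(2) q by (auto simp: doubleton_eq_iff)
  then have "{g q, g r} \<in> ?E" using rim[OF q(2) r(1)] r(3) by simp
  then obtain z where z: "{g q, z} \<in> ?E" "{g r, z} \<in> ?E"
    by (rule edges_in_trianglesE[OF tri])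
  show False
  proof (cases "z = v")
    case True
    then show False using z(2) spoke[OF r(1)] r(2) by (simp add: insert_commute)
  next
    case False
    have "g q \<noteq> v" using wheel_labelling_in[OF g q(2)] v by auto
    then have "{g q, z} \<in> E" using z(1) False unfolding reattach_def by (auto simp: doubleton_eq_iff)
    then obtain w where w: "w < m" "z = g w"
      using wheel_labelling_indexE[OF g] simple_graph_edgeD[OF s] by blast
    then have qw: "{q, w} \<in> wheel_edges m" "{q, w} \<noteq> {0, q}" and rw: "{r, w} \<in> wheel_edges m"
      using z rim[OF q(2) w(1)] rim[OF r(1) w(1)] by simp_all
    moreover have "w \<noteq> 0" using qw(2) by (auto simp: insert_commute)
    ultimately show False
      using wheel_rim_triangle_free[OF m r(3) rw qw(1)] q r by auto
  qed
qed

lemma wheel_reinsert_hub: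
  assumes m: "5 \<le> m" and g: "wheel_labelling g m V E" and s: "simple_graph V E" and v: "v \<notin> V"
    and abc: "a \<in> V" "b \<in> V" "c \<in> V" "{a, b} \<in> E" "{b, c} \<in> E" "{a, c} \<in> E"
    and tri: "edges_in_triangles (reattach E v a b c)"
  shows "b = g 0"
proof (rule ccontr)
  assume b: "b \<noteq> g 0"
  obtain i where i: "i < m" "a = g i" using wheel_labelling_indexE[OF g abc(1)] .
  obtain t where t: "t < m" "b = g t" using wheel_labelling_indexE[OF g abc(2)] .
  obtain k where k: "k < m" "c = g k" using wheel_labelling_indexE[OF g abc(3)] .
  have "t \<noteq> 0" using b t by metis
  have it: "{i, t} \<in> wheel_edges m" and tk: "{t, k} \<in> wheel_edges m" and ik: "{i, k} \<in> wheel_edges m"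
    using wheel_labelling_edge_iff[OF g] abc(4-6) i t k by auto
  consider "i = 0" | "k = 0" | "i \<noteq> 0" "k \<noteq> 0" by blast
  then show False
  proof cases
    case 1
    then have "1 \<le> k" "{k, t} \<in> wheel_edges m"
      using ik wheel_edge_irrefl[of m 0] m tk by (cases "k = 0"; auto simp: insert_commute)+
    moreover have "reattach E v a b c = reattach E v (g 0) (g t) (g k)"
      using 1 i t k by simp
    ultimately show False
      using removed_spoke_not_in_triangle[OF m g s v _ k(1) \<open>t \<noteq> 0\<close>] tri by simp
  next
    case 2
    then have "1 \<le> i" "{i, t} \<in> wheel_edges m"
      using ik wheel_edge_irrefl[of m 0] m it by (cases "i = 0"; auto)+
    moreover have "reattach E v a b c = reattach E v (g 0) (g t) (g i)"
      using 2 i t k reattach_swap by metis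
    ultimately show False
      using removed_spoke_not_in_triangle[OF m g s v _ i(1) \<open>t \<noteq> 0\<close>] tri by simp
  next
    case 3
    then show False using wheel_rim_triangle_free[OF m it tk ik] \<open>t \<noteq> 0\<close> by simp
  qed
qed

lemma wheel_labelling_reinsert:
  assumes m: "4 \<le> m" and g: "wheel_labelling g m V E" and s: "simple_graph V E" and v: "v \<notin> V"
    and abc: "a \<in> V" "b \<in> V" "c \<in> V" "{a, b} \<in> E" "{b, c} \<in> E" "{a, c} \<in> E"
    and tri: "edges_in_triangles (reattach E v a b c)"
  obtains h where "wheel_labelling h (m + 1) (insert v V) (reattach E v a b c)"
proof -
  obtain g' where g': "wheel_labelling g' m V E" "g' 0 = b"
  proof (cases "m = 4")
    case True
    then show ?thesis using wheel_labelling_4_hub[of g V E b] g abc(2) that by blast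
  next
    case False
    then show ?thesis using wheel_reinsert_hub[OF _ g s v abc tri] m g that by simp
  qed
  moreover have "a \<noteq> b" "c \<noteq> b" using simple_graph_edgeD[OF s] abc(4,5) by auto
  ultimately show ?thesis
    using wheel_labelling_reinsert_at_hub[OF m g'(1) s v abc(1,3) _ _ abc(6)] that by auto
qed

section \<open>The edge bound\<close>

lemma wheel_bound_bypass_step:
  assumes s: "simple_graph V E" and tri: "edges_in_triangles E" and v: "v \<in> V"
    and nbrs: "neighbours E v = {a, b, c}" and distinct: "a \<noteq> b" "a \<noteq> c" "b \<noteq> c"
    and ab: "{a, b} \<in> E" and bc: "{b, c} \<in> E" and n: "card V = n" "5 \<le> n"
    and IH: "2 * (n - 1) - 2 \<le> card (bypass E v a c) \<and>
      (card (bypass E v a c) = 2 * (n - 1) - 2 \<longrightarrow> (\<exists>g. wheel_labelling g (n - 1) (V - {v}) (bypass E v a c)))"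
  shows "2 * n - 2 \<le> card E \<and> (card E = 2 * n - 2 \<longrightarrow> (\<exists>g. wheel_labelling g n V E))"
proof (intro conjI impI)
  let ?E' = "bypass E v a c"
  have card: "card E = card ?E' + (if {a, c} \<in> E then 3 else 2)"
    by (rule card_bypass[OF s v nbrs distinct ab bc])
  then show "2 * n - 2 \<le> card E" using IH n by auto
  assume "card E = 2 * n - 2"
  then have "{a, c} \<notin> E" "card ?E' = 2 * (n - 1) - 2" using card IH n by (auto split: if_splits)
  then obtain g where g: "wheel_labelling g (n - 1) (V - {v}) ?E'" using IH by blast
  have E: "E = reattach ?E' v a b c"
    by (rule edges_eq_bypass[OF s v nbrs distinct ab bc \<open>{a, c} \<notin> E\<close>])
  have abc: "a \<in> V - {v}" "b \<in> V - {v}" "c \<in> V - {v}"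
    using neighbours_mem[OF s v nbrs distinct ab bc] by auto
  have triangle: "{a, b} \<in> ?E'" "{b, c} \<in> ?E'" "{a, c} \<in> ?E'"
    using bypass_clique[OF s v nbrs distinct ab bc] distinct by simp_all
  have "4 \<le> n - 1" "v \<notin> V - {v}" using n by auto
  from wheel_labelling_reinsert[OF this(1) g simple_graph_bypass[OF s v nbrs distinct ab bc] this(2)
      abc triangle] tri E
  obtain h where "wheel_labelling h (n - 1 + 1) (insert v (V - {v})) E" by auto
  moreover have "insert v (V - {v}) = V" "n - 1 + 1 = n" using v n by auto
  ultimately show "\<exists>g. wheel_labelling g n V E" by auto
qed

lemma edges_in_triangles_wheel_bound:
  assumes "simple_graph V E" "k_connected 3 V E" "edges_in_triangles E" "card V = n"
  shows "2 * n - 2 \<le> card E \<and> (card E = 2 * n - 2 \<longrightarrow> (\<exists>g. wheel_labelling g n V E))"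
  using assms
proof (induction n arbitrary: V E rule: less_induct)
  case (less n V E)
  then have s: "simple_graph V E" and k: "k_connected 3 V E" and tri: "edges_in_triangles E"
    and n: "card V = n" "4 \<le> n" unfolding k_connected_def by auto
  consider "\<forall>x\<in>V. 4 \<le> card (neighbours E x)" | v where "v \<in> V" "card (neighbours E v) = 3"
  proof (cases "\<forall>x\<in>V. 4 \<le> card (neighbours E x)")
    case False
    then obtain v where "v \<in> V" "\<not> 4 \<le> card (neighbours E v)" by blast
    then show ?thesis using that(2) k_connected_3_degree[OF s k] by force
  qed
  then show ?case
  proof cases
    case 1
    then have "4 * n \<le> 2 * card E" using card_edges_lower_bound[OF s] n by auto
    then have "2 * n - 2 < card E" using n by linarith
    then show ?thesis by simp
  next
    case (2 v)
    obtain a b c where abc: "neighbours E v = {a, b, c}" "a \<noteq> b" "a \<noteq> c" "b \<noteq> c" "{a, b} \<in> E" "{b, c} \<in> E"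
      using degree_3_neighbour_path[OF s tri 2(2)] by blast
    show ?thesis
    proof (cases "n = 4")
      case True
      then obtain g where "wheel_labelling g n V E" using k_connected_3_card_4_wheel[OF s k] n by auto
      then show ?thesis using wheel_labelling_card_edges[OF s] True by auto
    next
      case False
      have "card (V - {v}) = n - 1" using n 2(1) by simp
      with less.IH[of "n - 1" "V - {v}" "bypass E v a c"] n False show ?thesis
        using wheel_bound_bypass_step[OF s tri 2(1) abc n(1)] simple_graph_bypass[OF s 2(1) abc]
          k_connected_bypass[OF s 2(1) abc k] edges_in_triangles_bypass[OF s 2(1) abc tri]
        by simp
    qed
  qed
qed

theorem theorem3:
  fixes V :: "'a set" and E :: "'a set set" and n :: nat
  assumes "simple_graph V E"
    and "k_connected 3 V E"
    and "edge_pancyclic V E"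
    and "card V = n"
  shows "card E \<ge> 2 * n - 2 \<and>
         (card E = 2 * n - 2 \<longleftrightarrow> graph_iso V E {0..<n} (wheel_edges n))"
proof -
  have n: "4 \<le> n" using assms(2,4) unfolding k_connected_def by simp
  then have "edges_in_triangles E" using edge_pancyclic_edges_in_triangles[OF assms(3)] assms(4) by simp
  then have bound: "2 * n - 2 \<le> card E \<and> (card E = 2 * n - 2 \<longrightarrow> (\<exists>g. wheel_labelling g n V E))"
    using edges_in_triangles_wheel_bound assms(1,2,4) by blast
  have "graph_iso V E {0..<n} (wheel_edges n) \<Longrightarrow> card E = 2 * n - 2"
    using graph_iso_card_edges[OF assms(1) simple_graph_wheel[OF n]] card_wheel_edges[OF n] by simp
  then show ?thesis using bound wheel_labelling_graph_iso by blast
qed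

end
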